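(* The Grötzsch graph $M(C_5)$ has odd girth $5$ and admits an orientation in which every $5$-cycle (i.e., every shortest odd cycle) is alternating.
   Context: For a graph $G$, the Mycielskian $M(G)$ has vertex set $\{(v,0),(v,1):v\in V(G)\}\cup\{z\}$, with $(u,i)$ adjacent to $(v,j)$ iff $\{u,v\}\in E(G)$ and ($|i-j|=1$ or $i=j=0$), and $z$ adjacent to every $(v,1)$. The Grötzsch graph is $M(C_5)$. The odd girth is the length of a shortest odd cycle. An orientation assigns each edge exactly one direction. In an oriented graph, a subgraph that is a cycle is called alternating if at most one of its vertices has both positive in-degree and positive out-degree within that cycle. *)

theory Defs
  imports Main
begin

text \<open>Simple graphs are given by a vertex set V and a set E of edges,
each edge being a 2-element set of vertices.\<close>

datatype 'a mvert = MV 'a nat | MZ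

definition mycielski_V :: "'a set \<Rightarrow> 'a mvert set" where
  "mycielski_V V = {MV v i | v i. v \<in> V \<and> i \<in> {0, 1}} \<union> {MZ}"

definition mycielski_E :: "'a set \<Rightarrow> 'a set set \<Rightarrow> 'a mvert set set" where
  "mycielski_E V E =
     {{MV u i, MV v j} | u v i j. {u, v} \<in> E \<and> i \<in> {0, 1} \<and> j \<in> {0, 1} \<and>
         ((i = 0 \<and> j = 1) \<or> (i = 1 \<and> j = 0) \<or> (i = 0 \<and> j = 0))}
     \<union> {{MZ, MV v 1} | v. v \<in> V}"

definition C5_V :: "nat set" where
  "C5_V = {0..<5}"

definition C5_E :: "nat set set" where
  "C5_E = {{i, (i + 1) mod 5} | i. i < 5}"

definition groetzsch_V :: "nat mvert set" where
  "groetzsch_V = mycielski_V C5_V"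

definition groetzsch_E :: "nat mvert set set" where
  "groetzsch_E = mycielski_E C5_V C5_E"

definition is_cycle :: "'v set \<Rightarrow> 'v set set \<Rightarrow> 'v list \<Rightarrow> bool" where
  "is_cycle V E cs \<longleftrightarrow> length cs \<ge> 3 \<and> distinct cs \<and> set cs \<subseteq> V \<and>
     (\<forall>i < length cs. {cs ! i, cs ! ((i + 1) mod length cs)} \<in> E)"

definition odd_girth :: "'v set \<Rightarrow> 'v set set \<Rightarrow> nat" where
  "odd_girth V E = (LEAST k. odd k \<and> (\<exists>cs. is_cycle V E cs \<and> length cs = k))"

definition is_orientation :: "'v set set \<Rightarrow> ('v \<times> 'v) set \<Rightarrow> bool" where
  "is_orientation E D \<longleftrightarrow> (\<forall>(u, v) \<in> D. {u, v} \<in> E) \<and>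
     (\<forall>u v. {u, v} \<in> E \<longrightarrow> ((u, v) \<in> D \<longleftrightarrow> (v, u) \<notin> D))"

text \<open>Within the cycle cs, vertex cs!i has the two cycle neighbours
cs!((i+k-1) mod k) and cs!((i+1) mod k).\<close>

definition cyc_in_pos :: "('v \<times> 'v) set \<Rightarrow> 'v list \<Rightarrow> nat \<Rightarrow> bool" where
  "cyc_in_pos D cs i \<longleftrightarrow> (let k = length cs; x = cs ! i in
     (cs ! ((i + k - 1) mod k), x) \<in> D \<or> (cs ! ((i + 1) mod k), x) \<in> D)"

definition cyc_out_pos :: "('v \<times> 'v) set \<Rightarrow> 'v list \<Rightarrow> nat \<Rightarrow> bool" where
  "cyc_out_pos D cs i \<longleftrightarrow> (let k = length cs; x = cs ! i in
     (x, cs ! ((i + k - 1) mod k)) \<in> D \<or> (x, cs ! ((i + 1) mod k)) \<in> D)"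

definition alternating :: "('v \<times> 'v) set \<Rightarrow> 'v list \<Rightarrow> bool" where
  "alternating D cs \<longleftrightarrow>
     card {i. i < length cs \<and> cyc_in_pos D cs i \<and> cyc_out_pos D cs i} \<le> 1"

end

theory Submission
  imports Defs
begin

(* The outer 5-cycle of M(C5) bounds the odd girth by 5, and a search through the
   neighbour lists shows that the graph is triangle-free.  For the orientation, number the
   eleven vertices and direct every edge towards its endpoint with the larger number.  On a
   cycle a vertex then has both an in-arc and an out-arc exactly when its number lies
   strictly between the numbers of its two cycle neighbours, so the cycle is alternating
   iff this happens at most once.  For the numbering groetzsch_rank this is checked on
   every closed walk of length 5 with distinct vertices. *)

lemma is_cycle_length_3_iff:
  "is_cycle V E [a, b, c] \<longleftrightarrow>
     distinct [a, b, c] \<and> {a, b, c} \<subseteq> V \<and> {a, b} \<in> E \<and> {b, c} \<in> E \<and> {c, a} \<in> E"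
  by (simp add: is_cycle_def All_less_Suc) blast

lemma is_cycle_length_5_iff:
  "is_cycle V E [a, b, c, d, e] \<longleftrightarrow>
     distinct [a, b, c, d, e] \<and> {a, b, c, d, e} \<subseteq> V \<and>
     {a, b} \<in> E \<and> {b, c} \<in> E \<and> {c, d} \<in> E \<and> {d, e} \<in> E \<and> {e, a} \<in> E"
  by (simp add: is_cycle_def All_less_Suc) blast

lemma odd_girth_eq_5I:
  assumes "is_cycle V E cs" "length cs = 5"
    and "\<And>a b c. \<not> is_cycle V E [a, b, c]"
  shows "odd_girth V E = 5"
  unfolding odd_girth_def
proof (rule Least_equality)
  show "odd (5::nat) \<and> (\<exists>cs. is_cycle V E cs \<and> length cs = 5)"
    using assms(1,2) by auto
next
  fix k :: nat
  assume "odd k \<and> (\<exists>cs. is_cycle V E cs \<and> length cs = k)"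
  then obtain cs' where k: "odd k" and cs': "is_cycle V E cs'" "length cs' = k" by blast
  have "k \<noteq> 3"
  proof
    assume "k = 3"
    then obtain a b c where "cs' = [a, b, c]"
      using cs'(2) by (auto simp: length_Suc_conv numeral_eq_Suc)
    with cs'(1) assms(3) show False by blast
  qed
  moreover have "k \<ge> 3" using cs' by (simp add: is_cycle_def)
  ultimately show "5 \<le> k" using k by presburger
qed

fun mycielski_nbrs :: "'a list \<Rightarrow> ('a \<Rightarrow> 'a list) \<Rightarrow> 'a mvert \<Rightarrow> 'a mvert list" where
  "mycielski_nbrs vs N MZ = map (\<lambda>v. MV v 1) vs"
| "mycielski_nbrs vs N (MV v i) =
     map (\<lambda>u. MV u 0) (N v) @ (if i = 0 then map (\<lambda>u. MV u 1) (N v) else [MZ])"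

lemma mycielski_V_set:
  "mycielski_V (set vs) = set (MZ # map (\<lambda>v. MV v 0) vs @ map (\<lambda>v. MV v 1) vs)"
  unfolding mycielski_V_def by auto

lemma mycielski_E_MV_MV_iff:
  "{MV u i, MV v j} \<in> mycielski_E V E \<longleftrightarrow> {u, v} \<in> E \<and> (i, j) \<in> {(0, 0), (0, 1), (1, 0)}"
  unfolding mycielski_E_def by (auto simp: doubleton_eq_iff insert_commute)

lemma mycielski_E_MZ_iff:
  "{MZ, MV v i} \<in> mycielski_E V E \<longleftrightarrow> v \<in> V \<and> i = 1"
  unfolding mycielski_E_def by (auto simp: doubleton_eq_iff)

lemma mycielski_E_MZ_MZ: "{MZ} \<notin> mycielski_E V E"
  unfolding mycielski_E_def by (auto simp: doubleton_eq_iff)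

lemma mycielski_edge_iff:
  assumes vs: "set vs = V"
    and N: "\<And>u v. u \<in> V \<Longrightarrow> {u, v} \<in> E \<longleftrightarrow> v \<in> set (N u)"
    and x: "x \<in> mycielski_V V"
  shows "{x, y} \<in> mycielski_E V E \<longleftrightarrow> y \<in> set (mycielski_nbrs vs N x)"
proof -
  have MZ_first: "{MV v i, MZ} = {MZ, MV v i}" for v :: 'a and i by blast
  show ?thesis
    using x vs unfolding mycielski_V_def
    by (cases y) (auto simp: MZ_first mycielski_E_MV_MV_iff mycielski_E_MZ_iff mycielski_E_MZ_MZ N)
qed

lemma mycielski_edge_subset:
  assumes "\<And>e. e \<in> E \<Longrightarrow> e \<subseteq> V" "e \<in> mycielski_E V E"
  shows "e \<subseteq> mycielski_V V"
  using assms unfolding mycielski_E_def mycielski_V_def by blast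

definition rank_orientation :: "('v \<Rightarrow> 'a::linorder) \<Rightarrow> 'v set set \<Rightarrow> ('v \<times> 'v) set" where
  "rank_orientation r E = {(u, v). {u, v} \<in> E \<and> r u < r v}"

lemma is_orientation_rank_orientation:
  assumes "\<And>u v. {u, v} \<in> E \<Longrightarrow> r u \<noteq> r v"
  shows "is_orientation E (rank_orientation r E)"
  using assms unfolding is_orientation_def rank_orientation_def
  by (auto simp: insert_commute) (metis linorder_neqE)

definition strictly_between :: "'a::linorder \<Rightarrow> 'a \<Rightarrow> 'a \<Rightarrow> bool" where
  "strictly_between x y z \<longleftrightarrow> x < y \<and> y < z \<or> z < y \<and> y < x"

definition strictly_monotone_at :: "('v \<Rightarrow> 'a::linorder) \<Rightarrow> 'v list \<Rightarrow> nat \<Rightarrow> bool" where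
  "strictly_monotone_at r cs i \<longleftrightarrow> (let k = length cs in
     strictly_between (r (cs ! ((i + k - 1) mod k))) (r (cs ! i)) (r (cs ! ((i + 1) mod k))))"

lemma is_cycle_edge_prev:
  assumes "is_cycle V E cs" "i < length cs"
  shows "{cs ! ((i + length cs - 1) mod length cs), cs ! i} \<in> E"
proof -
  let ?k = "length cs"
  let ?j = "(i + ?k - 1) mod ?k"
  have pos: "0 < ?k" using assms(2) by linarith
  then have "?j < ?k" by simp
  have "(?j + 1) mod ?k = (i + ?k - 1 + 1) mod ?k" by (rule mod_add_left_eq)
  also have "\<dots> = i" using pos assms(2) by simp
  finally show ?thesis using \<open>?j < ?k\<close> assms(1) unfolding is_cycle_def by metis
qed

lemma cyc_in_out_pos_rank_orientation_iff:
  assumes "is_cycle V E cs" "i < length cs"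
  shows "cyc_in_pos (rank_orientation r E) cs i \<and> cyc_out_pos (rank_orientation r E) cs i
    \<longleftrightarrow> strictly_monotone_at r cs i"
proof -
  have "{cs ! i, cs ! ((i + 1) mod length cs)} \<in> E"
    using assms unfolding is_cycle_def by blast
  with is_cycle_edge_prev[OF assms] show ?thesis
    unfolding cyc_in_pos_def cyc_out_pos_def strictly_monotone_at_def strictly_between_def
      rank_orientation_def Let_def
    by (auto simp: insert_commute)
qed

lemma alternating_rank_orientation_iff:
  assumes "is_cycle V E cs"
  shows "alternating (rank_orientation r E) cs \<longleftrightarrow>
    card {i. i < length cs \<and> strictly_monotone_at r cs i} \<le> 1"
proof -
  have "{i. i < length cs \<and> cyc_in_pos (rank_orientation r E) cs i \<and> cyc_out_pos (rank_orientation r E) cs i}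
      = {i. i < length cs \<and> strictly_monotone_at r cs i}"
    using cyc_in_out_pos_rank_orientation_iff[OF assms] by blast
  then show ?thesis unfolding alternating_def by simp
qed

lemma card_strictly_monotone_at_5:
  "card {i. i < 5 \<and> strictly_monotone_at r [a, b, c, d, e] i} =
    length (filter id [strictly_between (r e) (r a) (r b), strictly_between (r a) (r b) (r c),
      strictly_between (r b) (r c) (r d), strictly_between (r c) (r d) (r e),
      strictly_between (r d) (r e) (r a)])"
  (is "_ = length (filter id ?bs)")
proof -
  have "strictly_monotone_at r [a, b, c, d, e] i = ?bs ! i" if "i < 5" for i
  proof -
    from that have "i = 0 \<or> i = 1 \<or> i = 2 \<or> i = 3 \<or> i = 4" by auto
    then show ?thesis by (elim disjE) (simp_all add: strictly_monotone_at_def del: One_nat_def)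
  qed
  then have "{i. i < 5 \<and> strictly_monotone_at r [a, b, c, d, e] i} = {i. i < length ?bs \<and> id (?bs ! i)}"
    by auto
  then show ?thesis by (simp only: length_filter_conv_card)
qed

definition C5_nbrs :: "nat \<Rightarrow> nat list" where
  "C5_nbrs u = [(u + 1) mod 5, (u + 4) mod 5]"

lemma C5_E_eq: "C5_E = {{0, 1}, {1, 2}, {2, 3}, {3, 4}, {4, 0}}"
proof -
  have "{i. i < 5} = {0, 1, 2, 3, 4::nat}" by auto
  moreover have "C5_E = (\<lambda>i. {i, (i + 1) mod 5}) ` {i. i < 5}"
    unfolding C5_E_def by blast
  ultimately show ?thesis by (simp add: insert_commute del: One_nat_def)
qed

lemma C5_edge_iff:
  assumes "u \<in> C5_V"
  shows "{u, v} \<in> C5_E \<longleftrightarrow> v \<in> set (C5_nbrs u)"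
proof -
  from assms have "u = 0 \<or> u = 1 \<or> u = 2 \<or> u = 3 \<or> u = 4"
    by (auto simp: C5_V_def)
  then show ?thesis
    by (elim disjE) (auto simp: C5_E_eq C5_nbrs_def doubleton_eq_iff)
qed

lemma C5_edge_subset: "e \<in> C5_E \<Longrightarrow> e \<subseteq> C5_V"
  unfolding C5_V_def C5_E_def by auto

lemma C5_V_list: "C5_V = set [0, 1, 2, 3, 4]"
  unfolding C5_V_def by auto

definition groetzsch_nbrs :: "nat mvert \<Rightarrow> nat mvert list" where
  "groetzsch_nbrs = mycielski_nbrs [0, 1, 2, 3, 4] C5_nbrs"

lemma groetzsch_V_list:
  "groetzsch_V = set [MZ, MV 0 0, MV 1 0, MV 2 0, MV 3 0, MV 4 0, MV 0 1, MV 1 1, MV 2 1, MV 3 1, MV 4 1]"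
  unfolding groetzsch_V_def C5_V_list mycielski_V_set by auto

lemma groetzsch_edge_iff:
  "x \<in> groetzsch_V \<Longrightarrow> {x, y} \<in> groetzsch_E \<longleftrightarrow> y \<in> set (groetzsch_nbrs x)"
  unfolding groetzsch_V_def groetzsch_E_def groetzsch_nbrs_def
  by (rule mycielski_edge_iff) (simp_all add: C5_V_list C5_edge_iff)

lemma groetzsch_edge_subset: "e \<in> groetzsch_E \<Longrightarrow> e \<subseteq> groetzsch_V"
  unfolding groetzsch_V_def groetzsch_E_def using C5_edge_subset by (rule mycielski_edge_subset)

lemma groetzsch_nbrs_simps:
  "groetzsch_nbrs MZ = [MV 0 1, MV 1 1, MV 2 1, MV 3 1, MV 4 1]"
  "groetzsch_nbrs (MV 0 0) = [MV 1 0, MV 4 0, MV 1 1, MV 4 1]"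
  "groetzsch_nbrs (MV 1 0) = [MV 2 0, MV 0 0, MV 2 1, MV 0 1]"
  "groetzsch_nbrs (MV 2 0) = [MV 3 0, MV 1 0, MV 3 1, MV 1 1]"
  "groetzsch_nbrs (MV 3 0) = [MV 4 0, MV 2 0, MV 4 1, MV 2 1]"
  "groetzsch_nbrs (MV 4 0) = [MV 0 0, MV 3 0, MV 0 1, MV 3 1]"
  "groetzsch_nbrs (MV 0 1) = [MV 1 0, MV 4 0, MZ]"
  "groetzsch_nbrs (MV 1 1) = [MV 2 0, MV 0 0, MZ]"
  "groetzsch_nbrs (MV 2 1) = [MV 3 0, MV 1 0, MZ]"
  "groetzsch_nbrs (MV 3 1) = [MV 4 0, MV 2 0, MZ]"
  "groetzsch_nbrs (MV 4 1) = [MV 0 0, MV 3 0, MZ]"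
  by (simp_all add: groetzsch_nbrs_def C5_nbrs_def)

lemma groetzsch_triangle_free: "\<not> is_cycle groetzsch_V groetzsch_E [a, b, c]"
proof
  assume "is_cycle groetzsch_V groetzsch_E [a, b, c]"
  then have "a \<in> groetzsch_V" "b \<in> set (groetzsch_nbrs a)" "c \<in> set (groetzsch_nbrs b)"
    "a \<in> set (groetzsch_nbrs c)"
    by (auto simp: is_cycle_length_3_iff groetzsch_edge_iff)
  moreover have "\<forall>a \<in> groetzsch_V. \<forall>b \<in> set (groetzsch_nbrs a). \<forall>c \<in> set (groetzsch_nbrs b).
      a \<notin> set (groetzsch_nbrs c)"
    by (simp add: groetzsch_V_list groetzsch_nbrs_simps del: One_nat_def)
  ultimately show False by blast
qed

fun groetzsch_rank :: "nat mvert \<Rightarrow> nat" where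
  "groetzsch_rank MZ = 10"
| "groetzsch_rank (MV v i) = (if i = 0 then [0, 3, 7, 5, 8] ! v else [1, 4, 2, 6, 9] ! v)"

lemma groetzsch_rank_simps:
  "groetzsch_rank MZ = 10"
  "groetzsch_rank (MV 0 0) = 0" "groetzsch_rank (MV 1 0) = 3" "groetzsch_rank (MV 2 0) = 7"
  "groetzsch_rank (MV 3 0) = 5" "groetzsch_rank (MV 4 0) = 8"
  "groetzsch_rank (MV 0 1) = 1" "groetzsch_rank (MV 1 1) = 4" "groetzsch_rank (MV 2 1) = 2"
  "groetzsch_rank (MV 3 1) = 6" "groetzsch_rank (MV 4 1) = 9"
  by simp_all

lemma groetzsch_rank_neq:
  assumes "{u, v} \<in> groetzsch_E"
  shows "groetzsch_rank u \<noteq> groetzsch_rank v"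
proof -
  have "u \<in> groetzsch_V" using groetzsch_edge_subset[OF assms] by simp
  moreover from this assms have "v \<in> set (groetzsch_nbrs u)" by (simp add: groetzsch_edge_iff)
  moreover have "\<forall>u \<in> groetzsch_V. \<forall>v \<in> set (groetzsch_nbrs u). groetzsch_rank u \<noteq> groetzsch_rank v"
    by (simp add: groetzsch_V_list groetzsch_nbrs_simps groetzsch_rank_simps del: One_nat_def)
  ultimately show ?thesis by blast
qed

lemma groetzsch_5_cycle: "is_cycle groetzsch_V groetzsch_E [MV 0 0, MV 1 0, MV 2 0, MV 3 0, MV 4 0]"
  by (simp add: is_cycle_length_5_iff groetzsch_edge_iff groetzsch_V_list groetzsch_nbrs_simps
      del: One_nat_def)

lemma groetzsch_5_cycles_alternating:
  assumes "is_cycle groetzsch_V groetzsch_E cs" "length cs = 5"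
  shows "alternating (rank_orientation groetzsch_rank groetzsch_E) cs"
proof -
  obtain a b c d e where cs: "cs = [a, b, c, d, e]"
    using assms(2) by (auto simp: length_Suc_conv numeral_eq_Suc)
  with assms(1) have "a \<in> groetzsch_V" "b \<in> set (groetzsch_nbrs a)" "c \<in> set (groetzsch_nbrs b)"
    "d \<in> set (groetzsch_nbrs c)" "e \<in> set (groetzsch_nbrs d)" "a \<in> set (groetzsch_nbrs e)"
    "distinct [a, b, c, d, e]"
    by (auto simp: is_cycle_length_5_iff groetzsch_edge_iff)
  moreover have "\<forall>a \<in> groetzsch_V. \<forall>b \<in> set (groetzsch_nbrs a). \<forall>c \<in> set (groetzsch_nbrs b).
      \<forall>d \<in> set (groetzsch_nbrs c). \<forall>e \<in> set (groetzsch_nbrs d).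
      a \<in> set (groetzsch_nbrs e) \<longrightarrow> distinct [a, b, c, d, e] \<longrightarrow>
      card {i. i < 5 \<and> strictly_monotone_at groetzsch_rank [a, b, c, d, e] i} \<le> 1"
    unfolding card_strictly_monotone_at_5
    by (simp add: groetzsch_V_list groetzsch_nbrs_simps groetzsch_rank_simps strictly_between_def
        del: One_nat_def)
  ultimately have "card {i. i < 5 \<and> strictly_monotone_at groetzsch_rank cs i} \<le> 1"
    unfolding cs by blast
  then show ?thesis unfolding alternating_rank_orientation_iff[OF assms(1)] assms(2) .
qed

theorem mainTheorem13:
  shows "odd_girth groetzsch_V groetzsch_E = 5 \<and>
    (\<exists>D. is_orientation groetzsch_E D \<and>
       (\<forall>cs. is_cycle groetzsch_V groetzsch_E cs \<and> length cs = 5 \<longrightarrow> alternating D cs))"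
proof
  show "odd_girth groetzsch_V groetzsch_E = 5"
    by (rule odd_girth_eq_5I[OF groetzsch_5_cycle _ groetzsch_triangle_free]) simp
  have "is_orientation groetzsch_E (rank_orientation groetzsch_rank groetzsch_E)"
    using groetzsch_rank_neq by (rule is_orientation_rank_orientation)
  with groetzsch_5_cycles_alternating show "\<exists>D. is_orientation groetzsch_E D \<and>
       (\<forall>cs. is_cycle groetzsch_V groetzsch_E cs \<and> length cs = 5 \<longrightarrow> alternating D cs)"
    by blast
qed

end
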